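(* Let $A$ and $B$ be self-adjoint operators on the same complex Hilbert space, with $B$ bounded, non-negative and $B \neq 0$. Then the set $\mathbb{R}\setminus\bigcup_{t\in\mathbb{R}}\sigma(A+tB)$ is at most countable.
   Context: $\sigma(T)$ denotes the spectrum of an operator $T$. $A$ may be unbounded; $A+tB$ is defined on the domain of $A$. *)

theory Defs
  imports "HOL-Analysis.Analysis"
begin

text \<open>A complex Hilbert space is modelled as a real Hilbert space (type class
  real_inner + complete_space) together with a complex structure J
  (multiplication by the imaginary unit), which is real-linear, satisfies
  J (J x) = - x and is an isometry for the real inner product.\<close>

definition complex_structure :: "('h::{real_inner,complete_space} \<Rightarrow> 'h) \<Rightarrow> bool" where
  "complex_structure J \<longleftrightarrow> linear J \<and> (\<forall>x. J (J x) = - x) \<and> (\<forall>x y. inner (J x) (J y) = inner x y)"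

definition cscale :: "('h::real_inner \<Rightarrow> 'h) \<Rightarrow> complex \<Rightarrow> 'h \<Rightarrow> 'h" where
  "cscale J c x = Re c *\<^sub>R x + Im c *\<^sub>R J x"

text \<open>Complex inner product (linear in the first, conjugate-linear in the second argument).\<close>
definition cinner :: "('h::real_inner \<Rightarrow> 'h) \<Rightarrow> 'h \<Rightarrow> 'h \<Rightarrow> complex" where
  "cinner J x y = Complex (inner x y) (inner x (J y))"

definition csubspace :: "('h::real_inner \<Rightarrow> 'h) \<Rightarrow> 'h set \<Rightarrow> bool" where
  "csubspace J D \<longleftrightarrow> 0 \<in> D \<and> (\<forall>x\<in>D. \<forall>y\<in>D. x + y \<in> D) \<and> (\<forall>c. \<forall>x\<in>D. cscale J c x \<in> D)"

definition clinear_on :: "('h::real_inner \<Rightarrow> 'h) \<Rightarrow> 'h set \<Rightarrow> ('h \<Rightarrow> 'h) \<Rightarrow> bool" where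
  "clinear_on J D T \<longleftrightarrow> csubspace J D \<and>
     (\<forall>x\<in>D. \<forall>y\<in>D. T (x + y) = T x + T y) \<and> (\<forall>c. \<forall>x\<in>D. T (cscale J c x) = cscale J c (T x))"

text \<open>Self-adjoint operator: densely defined, linear, and equal to its adjoint
  (same domain as the adjoint, and symmetric).\<close>
definition self_adjoint :: "('h::{real_inner,complete_space} \<Rightarrow> 'h) \<Rightarrow> 'h set \<Rightarrow> ('h \<Rightarrow> 'h) \<Rightarrow> bool" where
  "self_adjoint J D T \<longleftrightarrow> clinear_on J D T \<and> closure D = UNIV \<and>
     (\<forall>y. y \<in> D \<longleftrightarrow> (\<exists>z. \<forall>x\<in>D. cinner J (T x) y = cinner J x z)) \<and>
     (\<forall>x\<in>D. \<forall>y\<in>D. cinner J (T x) y = cinner J x (T y))"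

definition bounded_clinear_op :: "('h::{real_inner,complete_space} \<Rightarrow> 'h) \<Rightarrow> ('h \<Rightarrow> 'h) \<Rightarrow> bool" where
  "bounded_clinear_op J R \<longleftrightarrow> bounded_linear R \<and> (\<forall>c y. R (cscale J c y) = cscale J c (R y))"

definition op_spectrum :: "('h::{real_inner,complete_space} \<Rightarrow> 'h) \<Rightarrow> 'h set \<Rightarrow> ('h \<Rightarrow> 'h) \<Rightarrow> complex set" where
  "op_spectrum J D T = {l. \<not> (\<exists>R. bounded_clinear_op J R \<and>
      (\<forall>y. R y \<in> D \<and> T (R y) - cscale J l (R y) = y) \<and>
      (\<forall>x\<in>D. R (T x - cscale J l x) = x))}"

end

theory Submission
  imports Defs
begin

text \<open>For \<open>s\<close> in the set in question, \<open>A - s\<close> has a bounded symmetric inverse \<open>R\<^sub>s\<close>, and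
  so has \<open>A + t B - s\<close> for every real \<open>t\<close>.

  First, the form \<open>\<langle>R\<^sub>s B x, B x\<rangle>\<close> vanishes identically. Otherwise it takes a value of
  some sign \<open>\<sigma> \<noteq> 0\<close>; let \<open>M\<close> be the best constant in \<open>\<sigma> \<langle>R\<^sub>s B x, B x\<rangle> \<le> M \<langle>B x, x\<rangle>\<close>.
  Then \<open>M B - \<sigma> B R\<^sub>s B\<close> is positive, and nearly extremal vectors \<open>x\<^sub>n\<close> satisfy
  \<open>(M B - \<sigma> B R\<^sub>s B) x\<^sub>n \<rightarrow> 0\<close> while \<open>B x\<^sub>n \<not>\<rightarrow> 0\<close>. Thus \<open>z\<^sub>n = R\<^sub>s B x\<^sub>n\<close> satisfies
  \<open>(A - (\<sigma>/M) B - s) z\<^sub>n \<rightarrow> 0\<close>, so \<open>z\<^sub>n \<rightarrow> 0\<close> by bounded invertibility, and then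
  \<open>B x\<^sub>n = (A - s) z\<^sub>n \<rightarrow> 0\<close>, a contradiction.

  Second, fix \<open>u = B x\<^sub>0 \<noteq> 0\<close>. All \<open>R\<^sub>s u\<close> are orthogonal to \<open>u\<close>, and the resolvent
  identity \<open>R\<^sub>s - R\<^sub>s\<^sub>' = (s - s') R\<^sub>s R\<^sub>s\<^sub>'\<close> turns this into \<open>R\<^sub>s u \<bottom> R\<^sub>s\<^sub>' u\<close>. Hence
  \<open>\<parallel>R\<^sub>s\<^sub>' u\<parallel> \<le> \<parallel>R\<^sub>s u - R\<^sub>s\<^sub>' u\<parallel> \<le> \<bar>s - s'\<bar> \<parallel>R\<^sub>s\<parallel> \<parallel>R\<^sub>s\<^sub>' u\<parallel>\<close>, i.e. \<open>\<bar>s - s'\<bar> \<ge> 1 / \<parallel>R\<^sub>s\<parallel>\<close>: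
  the set is discrete in \<open>\<real>\<close>, hence countable.\<close>

definition symmetric_on :: "'a::real_inner set \<Rightarrow> ('a \<Rightarrow> 'a) \<Rightarrow> bool" where
  "symmetric_on D T \<longleftrightarrow> (\<forall>x\<in>D. \<forall>y\<in>D. inner (T x) y = inner x (T y))"

definition pos_op :: "('a::real_inner \<Rightarrow> 'a) \<Rightarrow> bool" where
  "pos_op P \<longleftrightarrow> bounded_linear P \<and> symmetric_on UNIV P \<and> (\<forall>x. 0 \<le> inner (P x) x)"

lemma pos_opD:
  assumes "pos_op P"
  shows "bounded_linear P" "inner (P x) y = inner x (P y)" "0 \<le> inner (P x) x"
  using assms by (auto simp: pos_op_def symmetric_on_def)

lemma quadratic_nonneg_discriminant:
  fixes a b c :: real
  assumes "0 \<le> c" and nonneg: "\<And>l. 0 \<le> a + 2 * l * b + l\<^sup>2 * c"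
  shows "b\<^sup>2 \<le> a * c"
proof (cases "c = 0")
  case True
  show ?thesis
  proof (rule ccontr)
    assume "\<not> ?thesis"
    then have "b \<noteq> 0" using True by auto
    have "0 \<le> a + 2 * (- (a + 1) / (2 * b)) * b" using nonneg[of "- (a + 1) / (2 * b)"] True by simp
    also have "\<dots> = -1" using \<open>b \<noteq> 0\<close> by (simp add: field_simps)
    finally show False by simp
  qed
next
  case False
  with \<open>0 \<le> c\<close> have "c > 0" by simp
  have "0 \<le> a + 2 * (- b / c) * b + (- b / c)\<^sup>2 * c" by (rule nonneg)
  also have "\<dots> = a - b\<^sup>2 / c" using \<open>c > 0\<close> by (simp add: field_simps power2_eq_square)
  finally show ?thesis using \<open>c > 0\<close> by (simp add: field_simps mult.commute)
qed

lemma pos_op_cauchy_schwarz: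
  assumes "pos_op P"
  shows "(inner (P x) y)\<^sup>2 \<le> inner (P x) x * inner (P y) y"
proof -
  interpret P: bounded_linear P using assms by (rule pos_opD)
  have nonneg: "0 \<le> inner (P v) v" for v using assms by (rule pos_opD)
  have sym: "inner (P y) x = inner (P x) y"
    using assms by (simp add: pos_op_def symmetric_on_def inner_commute)
  show ?thesis
  proof (rule quadratic_nonneg_discriminant[OF nonneg])
    fix l :: real
    have "0 \<le> inner (P (x + l *\<^sub>R y)) (x + l *\<^sub>R y)" by (rule nonneg)
    also have "\<dots> = inner (P x) x + l * inner (P x) y + l * inner (P y) x + l\<^sup>2 * inner (P y) y"
      by (simp add: P.add P.scale inner_add_left inner_add_right power2_eq_square algebra_simps)
    finally show "0 \<le> inner (P x) x + 2 * l * inner (P x) y + l\<^sup>2 * inner (P y) y"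
      by (simp add: sym)
  qed
qed

lemma pos_op_norm_square_le:
  assumes "pos_op P"
  shows "(norm (P x))\<^sup>2 \<le> onorm P * inner (P x) x"
proof (cases "P x = 0")
  case True
  then show ?thesis by simp
next
  case False
  have lin: "bounded_linear P" using assms by (rule pos_opD)
  have "((norm (P x))\<^sup>2)\<^sup>2 = (inner (P x) (P x))\<^sup>2" by (simp add: power2_norm_eq_inner)
  also have "\<dots> \<le> inner (P x) x * inner (P (P x)) (P x)"
    by (rule pos_op_cauchy_schwarz[OF assms])
  also have "\<dots> \<le> inner (P x) x * (onorm P * (norm (P x))\<^sup>2)"
  proof (rule mult_left_mono)
    have "inner (P (P x)) (P x) \<le> norm (P (P x)) * norm (P x)" by (rule norm_cauchy_schwarz)
    also have "\<dots> \<le> (onorm P * norm (P x)) * norm (P x)" by (simp add: mult_right_mono onorm[OF lin])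
    finally show "inner (P (P x)) (P x) \<le> onorm P * (norm (P x))\<^sup>2" by (simp add: power2_eq_square)
    show "0 \<le> inner (P x) x" using assms by (rule pos_opD)
  qed
  finally have "(norm (P x))\<^sup>2 * (norm (P x))\<^sup>2 \<le> (onorm P * inner (P x) x) * (norm (P x))\<^sup>2"
    by (simp add: power2_eq_square algebra_simps)
  moreover have "0 < (norm (P x))\<^sup>2" using False by simp
  ultimately show ?thesis by (rule mult_right_le_imp_le)
qed

lemma pos_op_tendsto_zero:
  assumes "pos_op P" and "(\<lambda>n. inner (P (x n)) (x n)) \<longlonglongrightarrow> 0"
  shows "(\<lambda>n. P (x n)) \<longlonglongrightarrow> 0"
proof -
  have "(\<lambda>n. (norm (P (x n)))\<^sup>2) \<longlonglongrightarrow> 0"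
    by (rule tendsto_sandwich[OF _ _ tendsto_const tendsto_mult_right_zero[OF assms(2), of "onorm P"]])
      (simp_all add: always_eventually pos_op_norm_square_le[OF assms(1)])
  then have "(\<lambda>n. sqrt ((norm (P (x n)))\<^sup>2)) \<longlonglongrightarrow> 0" using tendsto_real_sqrt by force
  then show ?thesis by (simp add: tendsto_norm_zero_iff)
qed

lemma optimal_form_bound:
  fixes T B :: "'a::real_inner \<Rightarrow> 'a"
  assumes "linear T" "linear B"
    and B_nonneg: "\<And>x. 0 \<le> inner (B x) x"
    and T_le: "\<And>x. inner (T x) x \<le> C * inner (B x) x"
    and T_pos: "0 < inner (T x0) x0"
  obtains M xs where "M > 0" "\<And>x. inner (T x) x \<le> M * inner (B x) x"
    "\<And>n::nat. inner (B (xs n)) (xs n) \<le> 1" "(\<lambda>n. inner (T (xs n)) (xs n)) \<longlonglongrightarrow> M"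
proof -
  interpret T: linear T by fact
  interpret B: linear B by fact
  define Q where "Q = {inner (T x) x | x. inner (B x) x \<le> 1}"
  define M where "M = Sup Q"
  have "C > 0"
    using T_le[of x0] T_pos mult_nonpos_nonneg[OF _ B_nonneg[of x0], of C] by linarith
  have "inner (T 0) 0 \<in> Q" unfolding Q_def by (rule CollectI, rule exI[of _ 0]) (simp add: B.zero)
  then have "Q \<noteq> {}" by blast
  have "bdd_above Q"
  proof (rule bdd_aboveI)
    fix q assume "q \<in> Q"
    then obtain x where "q = inner (T x) x" "inner (B x) x \<le> 1" unfolding Q_def by blast
    then show "q \<le> C" using T_le[of x] \<open>C > 0\<close> by (smt (verit) mult_left_le)
  qed
  have le_M: "inner (T x) x \<le> M" if "inner (B x) x \<le> 1" for x
    unfolding M_def by (rule cSup_upper[OF _ \<open>bdd_above Q\<close>]) (use that Q_def in blast)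
  have bound: "inner (T x) x \<le> M * inner (B x) x" for x
  proof (cases "inner (B x) x = 0")
    case True
    then show ?thesis using T_le[of x] by simp
  next
    case False
    define a where "a = inner (B x) x"
    have "a > 0" using False B_nonneg[of x] unfolding a_def by simp
    have "inner (T (x /\<^sub>R sqrt a)) (x /\<^sub>R sqrt a) \<le> M"
      using \<open>a > 0\<close> by (intro le_M) (simp add: B.scale a_def[symmetric] field_simps)
    then show ?thesis
      using \<open>a > 0\<close> unfolding a_def[symmetric] by (simp add: T.scale field_simps)
  qed
  have "M > 0"
    using bound[of x0] T_pos mult_nonpos_nonneg[OF _ B_nonneg[of x0], of M] by linarith
  have "\<exists>x. inner (B x) x \<le> 1 \<and> M + - inverse (real (Suc n)) < inner (T x) x" for n
  proof -
    have "M + - inverse (real (Suc n)) < Sup Q" unfolding M_def[symmetric] by simp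
    then obtain q where "q \<in> Q" "M + - inverse (real (Suc n)) < q"
      using less_cSup_iff[OF \<open>Q \<noteq> {}\<close> \<open>bdd_above Q\<close>] by blast
    then show ?thesis unfolding Q_def by blast
  qed
  then obtain xs where xs: "\<And>n. inner (B (xs n)) (xs n) \<le> 1"
    "\<And>n. M + - inverse (real (Suc n)) < inner (T (xs n)) (xs n)"
    by metis
  have "(\<lambda>n. inner (T (xs n)) (xs n)) \<longlonglongrightarrow> M"
    by (rule tendsto_sandwich[OF _ _ LIMSEQ_inverse_real_of_nat_add_minus tendsto_const])
      (use xs le_M in \<open>auto intro: always_eventually less_imp_le\<close>)
  with \<open>M > 0\<close> bound xs(1) show ?thesis by (rule that)
qed

lemma sandwich_form_le:
  assumes "pos_op B" "bounded_linear R"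
  shows "inner (B (R (B x))) x \<le> (onorm R * onorm B) * inner (B x) x"
proof -
  have "inner (B (R (B x))) x = inner (R (B x)) (B x)"
    by (rule pos_opD(2)[OF \<open>pos_op B\<close>])
  also have "\<dots> \<le> norm (R (B x)) * norm (B x)" by (rule norm_cauchy_schwarz)
  also have "\<dots> \<le> onorm R * (norm (B x))\<^sup>2"
    using mult_right_mono[OF onorm[OF \<open>bounded_linear R\<close>, of "B x"] norm_ge_zero[of "B x"]]
    by (simp add: power2_eq_square mult.assoc)
  also have "\<dots> \<le> onorm R * (onorm B * inner (B x) x)"
    by (intro mult_left_mono pos_op_norm_square_le \<open>pos_op B\<close> onorm_pos_le \<open>bounded_linear R\<close>)
  finally show ?thesis by simp
qed

lemma extremal_sequence_tendsto_kernel: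
  fixes B T :: "'a::real_inner \<Rightarrow> 'a"
  assumes "pos_op B" "bounded_linear T" "symmetric_on UNIV T" "M \<ge> 0"
    and M_bound: "\<And>x. inner (T x) x \<le> M * inner (B x) x"
    and xs: "\<And>n. inner (B (xs n)) (xs n) \<le> 1" and lim: "(\<lambda>n. inner (T (xs n)) (xs n)) \<longlonglongrightarrow> M"
  shows "(\<lambda>n. M *\<^sub>R B (xs n) - T (xs n)) \<longlonglongrightarrow> 0"
proof -
  define P where "P x = M *\<^sub>R B x - T x" for x
  have P_form: "inner (P x) x = M * inner (B x) x - inner (T x) x" for x
    unfolding P_def by (simp add: inner_diff_left)
  have "pos_op P"
    unfolding pos_op_def symmetric_on_def
  proof (intro conjI ballI allI)
    show "bounded_linear P" unfolding P_def
      by (rule bounded_linear_sub[OF bounded_linear_compose[OF bounded_linear_scaleR_right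
            pos_opD(1)[OF \<open>pos_op B\<close>]] \<open>bounded_linear T\<close>])
    show "inner (P x) y = inner x (P y)" for x y
      using \<open>pos_op B\<close> \<open>symmetric_on UNIV T\<close>
      by (simp add: P_def inner_diff_left inner_diff_right pos_op_def symmetric_on_def)
    show "0 \<le> inner (P x) x" for x
      unfolding P_form using M_bound[of x] by simp
  qed
  have upper: "(\<lambda>n. M - inner (T (xs n)) (xs n)) \<longlonglongrightarrow> 0"
    using tendsto_diff[OF tendsto_const lim, of M] by simp
  have "inner (P (xs n)) (xs n) \<le> M - inner (T (xs n)) (xs n)" for n
    unfolding P_form using mult_left_mono[OF xs[of n] \<open>M \<ge> 0\<close>] by simp
  moreover have "0 \<le> inner (P (xs n)) (xs n)" for n
    using \<open>pos_op P\<close> by (rule pos_opD)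
  ultimately have "(\<lambda>n. inner (P (xs n)) (xs n)) \<longlonglongrightarrow> 0"
    by (intro tendsto_sandwich[OF _ _ tendsto_const upper] always_eventually allI)
  then show ?thesis using pos_op_tendsto_zero[OF \<open>pos_op P\<close>] by (simp add: P_def)
qed

lemma approximate_eigensequence:
  fixes B R :: "'a::real_inner \<Rightarrow> 'a"
  assumes "pos_op B" "bounded_linear R" "symmetric_on UNIV R"
    and pos: "0 < inner (R (B x0)) (B x0)"
  obtains M xs where "M > 0" "(\<lambda>n::nat. M *\<^sub>R B (xs n) - B (R (B (xs n)))) \<longlonglongrightarrow> 0"
    "\<not> (\<lambda>n. B (xs n)) \<longlonglongrightarrow> 0"
proof -
  interpret B: bounded_linear B using \<open>pos_op B\<close> by (rule pos_opD)
  interpret R: bounded_linear R by fact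
  define T where "T x = B (R (B x))" for x
  have T_form: "inner (T x) x = inner (R (B x)) (B x)" for x
    unfolding T_def by (rule pos_opD(2)[OF \<open>pos_op B\<close>])
  have "bounded_linear T" unfolding T_def
    by (intro bounded_linear_compose[OF B.bounded_linear] bounded_linear_compose[OF R.bounded_linear]
        B.bounded_linear)
  have "symmetric_on UNIV T"
    using \<open>pos_op B\<close> \<open>symmetric_on UNIV R\<close> by (simp add: T_def pos_op_def symmetric_on_def)
  obtain M xs where "M > 0" and M_bound: "\<And>x. inner (T x) x \<le> M * inner (B x) x"
    and xs: "\<And>n. inner (B (xs n)) (xs n) \<le> 1" and lim: "(\<lambda>n. inner (T (xs n)) (xs n)) \<longlonglongrightarrow> M"
    using optimal_form_bound[OF bounded_linear.linear[OF \<open>bounded_linear T\<close>] B.linear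
        pos_opD(3)[OF \<open>pos_op B\<close>] sandwich_form_le[OF \<open>pos_op B\<close> R.bounded_linear, folded T_def]]
      pos unfolding T_form by blast
  have "(\<lambda>n. M *\<^sub>R B (xs n) - B (R (B (xs n)))) \<longlonglongrightarrow> 0"
    using extremal_sequence_tendsto_kernel[OF \<open>pos_op B\<close> \<open>bounded_linear T\<close> \<open>symmetric_on UNIV T\<close> _
        M_bound xs lim] \<open>M > 0\<close> by (simp add: T_def)
  moreover have "\<not> (\<lambda>n. B (xs n)) \<longlonglongrightarrow> 0"
  proof
    assume "(\<lambda>n. B (xs n)) \<longlonglongrightarrow> 0"
    then have "(\<lambda>n. inner (R (B (xs n))) (B (xs n))) \<longlonglongrightarrow> inner (R 0) 0"
      by (intro tendsto_inner R.tendsto)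
    then have "(\<lambda>n. inner (T (xs n)) (xs n)) \<longlonglongrightarrow> 0" by (simp add: T_form)
    with lim \<open>M > 0\<close> show False using LIMSEQ_unique by force
  qed
  ultimately show ?thesis using \<open>M > 0\<close> that by blast
qed

definition real_linear_on :: "'a::real_vector set \<Rightarrow> ('a \<Rightarrow> 'a) \<Rightarrow> bool" where
  "real_linear_on D T \<longleftrightarrow> subspace D \<and> (\<forall>x\<in>D. \<forall>y\<in>D. T (x + y) = T x + T y) \<and>
     (\<forall>r. \<forall>x\<in>D. T (r *\<^sub>R x) = r *\<^sub>R T x)"

lemma real_linear_on_diff:
  assumes "real_linear_on D T" "x \<in> D" "y \<in> D"
  shows "x - y \<in> D" "T (x - y) = T x - T y"
proof -
  have "subspace D" using assms(1) by (simp add: real_linear_on_def)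
  then show "x - y \<in> D" using assms(2,3) by (rule subspace_diff)
  have "(-1) *\<^sub>R y \<in> D" using \<open>subspace D\<close> assms(3) by (rule subspace_scale)
  then show "T (x - y) = T x - T y"
    using assms unfolding real_linear_on_def by (metis scaleR_minus1_left diff_conv_add_uminus)
qed

definition is_resolvent :: "'a::real_normed_vector set \<Rightarrow> ('a \<Rightarrow> 'a) \<Rightarrow> real \<Rightarrow> ('a \<Rightarrow> 'a) \<Rightarrow> bool" where
  "is_resolvent D T s R \<longleftrightarrow> bounded_linear R \<and> (\<forall>y. R y \<in> D \<and> T (R y) - s *\<^sub>R R y = y) \<and>
     (\<forall>x\<in>D. R (T x - s *\<^sub>R x) = x)"

lemma resolvent_eq_zero_iff:
  assumes "is_resolvent D T s R"
  shows "R u = 0 \<longleftrightarrow> u = 0"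
proof
  have "R 0 = 0" using assms by (simp add: is_resolvent_def linear_simps)
  moreover have right_inverse: "T (R y) - s *\<^sub>R R y = y" for y
    using assms by (simp add: is_resolvent_def)
  ultimately show "u = 0" if "R u = 0" using right_inverse[of u] right_inverse[of 0] that by simp
  show "R u = 0" if "u = 0" using that \<open>R 0 = 0\<close> by simp
qed

lemma resolvent_symmetric:
  assumes "symmetric_on D A" "is_resolvent D A s R"
  shows "symmetric_on UNIV R"
  unfolding symmetric_on_def
proof (intro ballI)
  fix x y
  have in_D: "R x \<in> D" "R y \<in> D" and inv: "A (R x) - s *\<^sub>R R x = x" "A (R y) - s *\<^sub>R R y = y"
    using assms(2) by (auto simp: is_resolvent_def)
  have "inner (R x) y = inner (R x) (A (R y)) - s * inner (R x) (R y)"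
    by (metis inv(2) inner_diff_right inner_scaleR_right)
  also have "\<dots> = inner (A (R x) - s *\<^sub>R R x) (R y)"
    using assms(1) in_D by (simp add: symmetric_on_def inner_diff_left)
  finally show "inner (R x) y = inner x (R y)" by (simp add: inv(1))
qed

lemma resolvent_identity:
  assumes "real_linear_on D A" "is_resolvent D A s1 R1" "is_resolvent D A s2 R2"
  shows "R1 v - R2 v = (s1 - s2) *\<^sub>R R1 (R2 v)"
proof -
  have in_D: "R1 v \<in> D" "R2 v \<in> D" and inv: "A (R1 v) - s1 *\<^sub>R R1 v = v" "A (R2 v) - s2 *\<^sub>R R2 v = v"
    using assms(2,3) by (auto simp: is_resolvent_def)
  have "A (R1 v - R2 v) - s1 *\<^sub>R (R1 v - R2 v) = (s1 - s2) *\<^sub>R R2 v"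
    using inv unfolding real_linear_on_diff(2)[OF assms(1) in_D] by (simp add: algebra_simps)
  moreover have "R1 (A (R1 v - R2 v) - s1 *\<^sub>R (R1 v - R2 v)) = R1 v - R2 v"
    using assms(2) real_linear_on_diff(1)[OF assms(1) in_D] by (simp add: is_resolvent_def)
  moreover have "linear R1" using assms(2) by (simp add: is_resolvent_def bounded_linear.linear)
  ultimately show ?thesis by (metis linear_scale)
qed

lemma resolvent_form_vanishes_on_range:
  fixes A B :: "'a::real_inner \<Rightarrow> 'a"
  assumes "pos_op B" "symmetric_on D A" and R: "is_resolvent D A s R"
    and pencil: "\<And>t. \<exists>Q. is_resolvent D (\<lambda>x. A x + t *\<^sub>R B x) s Q"
  shows "inner (R (B x)) (B x) = 0"
proof (rule ccontr)
  assume nonzero: "inner (R (B x)) (B x) \<noteq> 0"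
  interpret B: bounded_linear B using \<open>pos_op B\<close> by (rule pos_opD)
  have "bounded_linear R" using R by (simp add: is_resolvent_def)
  define \<sigma> where "\<sigma> = sgn (inner (R (B x)) (B x))"
  define R' where "R' v = \<sigma> *\<^sub>R R v" for v
  have "bounded_linear R'" unfolding R'_def
    by (rule bounded_linear_compose[OF bounded_linear_scaleR_right \<open>bounded_linear R\<close>])
  moreover have "symmetric_on UNIV R'"
    using resolvent_symmetric[OF \<open>symmetric_on D A\<close> R] by (simp add: symmetric_on_def R'_def)
  moreover have "0 < inner (R' (B x)) (B x)"
    using nonzero by (simp add: R'_def \<sigma>_def sgn_if)
  ultimately obtain M xs where "M > 0"
    and approx: "(\<lambda>n. M *\<^sub>R B (xs n) - B (R' (B (xs n)))) \<longlonglongrightarrow> 0"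
    and not_null: "\<not> (\<lambda>n. B (xs n)) \<longlonglongrightarrow> 0"
    by (rule approximate_eigensequence[OF \<open>pos_op B\<close>])
  \<comment> \<open>\<open>R (B (xs n))\<close> is then an approximate eigenvector of \<open>A + t B\<close> at \<open>s\<close>, for this \<open>t\<close>\<close>
  define t where "t = - \<sigma> / M"
  obtain Q where Q: "is_resolvent D (\<lambda>x. A x + t *\<^sub>R B x) s Q" using pencil by blast
  define y where "y n = B (xs n)" for n
  define z where "z n = R (y n)" for n
  define e where "e n = A (z n) + t *\<^sub>R B (z n) - s *\<^sub>R z n" for n
  have y_eq: "y n = A (z n) - s *\<^sub>R z n" for n
    using R by (simp add: is_resolvent_def z_def)
  have "e = (\<lambda>n. (1 / M) *\<^sub>R (M *\<^sub>R B (xs n) - B (R' (B (xs n)))))"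
  proof
    fix n
    show "e n = (1 / M) *\<^sub>R (M *\<^sub>R B (xs n) - B (R' (B (xs n))))"
      using \<open>M > 0\<close> y_eq[of n, symmetric]
      by (simp add: e_def z_def y_def R'_def t_def B.scale algebra_simps)
  qed
  then have "e \<longlonglongrightarrow> 0"
    using tendsto_scaleR[OF tendsto_const approx, of "1 / M"] by simp
  moreover have "z = (\<lambda>n. Q (e n))"
    using Q R by (simp add: is_resolvent_def e_def z_def fun_eq_iff)
  moreover have "bounded_linear Q" using Q by (simp add: is_resolvent_def)
  ultimately have "z \<longlonglongrightarrow> 0" using bounded_linear.tendsto_zero by metis
  then have "(\<lambda>n. e n - t *\<^sub>R B (z n)) \<longlonglongrightarrow> 0 - t *\<^sub>R 0"
    using \<open>e \<longlonglongrightarrow> 0\<close> by (intro tendsto_intros B.tendsto_zero)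
  moreover have "y = (\<lambda>n. e n - t *\<^sub>R B (z n))"
    by (simp add: y_eq e_def fun_eq_iff)
  ultimately have "y \<longlonglongrightarrow> 0" by simp
  with not_null show False by (simp add: y_def[abs_def])
qed

lemma resolvent_separation:
  assumes "real_linear_on D A" "symmetric_on D A" "s1 \<noteq> s2"
    and R1: "is_resolvent D A s1 R1" and R2: "is_resolvent D A s2 R2"
    and "u \<noteq> 0" "inner (R1 u) u = 0" "inner (R2 u) u = 0"
  shows "1 \<le> \<bar>s1 - s2\<bar> * onorm R1"
proof -
  define w1 where "w1 = R1 u"
  define w2 where "w2 = R2 u"
  have diff: "w1 - w2 = (s1 - s2) *\<^sub>R R1 w2"
    unfolding w1_def w2_def by (rule resolvent_identity[OF assms(1) R1 R2])
  \<comment> \<open>\<open>w1 - w2\<close> is orthogonal to \<open>u\<close>; by the resolvent identity this says \<open>w2 \<bottom> w1\<close>\<close>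
  have "(s1 - s2) * inner w2 w1 = (s1 - s2) * inner (R1 w2) u"
    using resolvent_symmetric[OF assms(2) R1] by (simp add: symmetric_on_def w1_def)
  also have "\<dots> = inner (w1 - w2) u" by (simp add: diff)
  also have "\<dots> = 0" using assms(7,8) by (simp add: w1_def w2_def inner_diff_left)
  finally have "inner w2 w1 = 0" using \<open>s1 \<noteq> s2\<close> by simp
  then have "(norm (w1 - w2))\<^sup>2 = (norm w1)\<^sup>2 + (norm w2)\<^sup>2"
    by (simp add: power2_norm_eq_inner inner_diff_left inner_diff_right inner_commute)
  then have "norm w2 \<le> norm (w1 - w2)"
    by (metis le_add_same_cancel2 zero_le_power2 norm_ge_zero power2_le_imp_le)
  also have "\<dots> \<le> \<bar>s1 - s2\<bar> * (onorm R1 * norm w2)"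
    using onorm[of R1 w2] R1 by (simp add: diff is_resolvent_def mult_left_mono)
  finally have "norm w2 * 1 \<le> norm w2 * (\<bar>s1 - s2\<bar> * onorm R1)" by (simp add: algebra_simps)
  moreover have "norm w2 > 0" using resolvent_eq_zero_iff[OF R2] \<open>u \<noteq> 0\<close> by (simp add: w2_def)
  ultimately show ?thesis by simp
qed

lemma discrete_imp_countable:
  fixes S :: "'a::second_countable_topology set"
  assumes "discrete S"
  shows "countable S"
proof -
  obtain \<B> :: "'a set set" where "countable \<B>" and basis: "topological_basis \<B>"
    using ex_countable_basis by blast
  have "\<exists>V\<in>\<B>. V \<inter> S = {x}" if "x \<in> S" for x
  proof -
    obtain U where "open U" "U \<inter> S = {x}"
      using assms \<open>x \<in> S\<close> by (auto simp: discrete_def isolated_in_def)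
    moreover obtain V where "V \<in> \<B>" "x \<in> V" "V \<subseteq> U"
      by (rule topological_basisE[OF basis \<open>open U\<close>]) (use \<open>U \<inter> S = {x}\<close> in blast)
    ultimately show ?thesis using \<open>x \<in> S\<close> by blast
  qed
  then obtain f where f: "\<And>x. x \<in> S \<Longrightarrow> f x \<in> \<B> \<and> f x \<inter> S = {x}" by metis
  have "inj_on f S" using f by (intro inj_onI) (metis singleton_inject)
  moreover have "countable (f ` S)" using f \<open>countable \<B>\<close> by (blast intro: countable_subset)
  ultimately show ?thesis by (rule countable_image_inj_on[rotated])
qed

lemma countable_if_resolvent_forms_vanish:
  assumes "real_linear_on D A" "symmetric_on D A" "u \<noteq> 0"
    and vanish: "\<And>s. s \<in> S \<Longrightarrow> \<exists>R. is_resolvent D A s R \<and> inner (R u) u = 0"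
  shows "countable S"
proof -
  obtain res where res: "\<And>s. s \<in> S \<Longrightarrow> is_resolvent D A s (res s) \<and> inner (res s u) u = 0"
    using vanish by metis
  have "s isolated_in S" if "s \<in> S" for s
    unfolding isolated_in_dist_Ex_iff
  proof (intro conjI exI[of _ "1 / (onorm (res s) + 1)"] ballI impI)
    have "0 \<le> onorm (res s)" using res[OF that] by (simp add: is_resolvent_def onorm_pos_le)
    then show "0 < 1 / (onorm (res s) + 1)" by simp
    fix s' assume "s' \<in> S" and close: "dist s s' < 1 / (onorm (res s) + 1)"
    show "s' = s"
    proof (rule ccontr)
      assume "s' \<noteq> s"
      have "1 \<le> \<bar>s - s'\<bar> * onorm (res s)"
        using resolvent_separation[OF assms(1,2) _ _ _ \<open>u \<noteq> 0\<close>, of s s' "res s" "res s'"]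
          res[OF that] res[OF \<open>s' \<in> S\<close>] \<open>s' \<noteq> s\<close> by simp
      also have "\<dots> \<le> 1 / (onorm (res s) + 1) * onorm (res s)"
        using close \<open>0 \<le> onorm (res s)\<close> by (intro mult_right_mono) (simp_all add: dist_real_def)
      also have "\<dots> < 1"
        using \<open>0 \<le> onorm (res s)\<close> by (simp add: field_simps)
      finally show False by simp
    qed
  qed (fact that)
  then show ?thesis by (intro discrete_imp_countable discreteI)
qed

lemma cscale_of_real [simp]: "cscale J (complex_of_real r) x = r *\<^sub>R x"
  by (simp add: cscale_def)

lemma clinear_on_imp_real_linear_on:
  assumes "clinear_on J D T"
  shows "real_linear_on D T"
  using assms unfolding clinear_on_def csubspace_def real_linear_on_def subspace_def
  by (metis cscale_of_real)

lemma self_adjoint_imp_symmetric_on: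
  assumes "self_adjoint J D T"
  shows "symmetric_on D T"
  using assms unfolding self_adjoint_def symmetric_on_def cinner_def by (metis complex.sel(1))

lemma resolvent_if_not_in_op_spectrum:
  assumes "complex_of_real s \<notin> op_spectrum J D T"
  shows "\<exists>R. is_resolvent D T s R"
  using assms unfolding op_spectrum_def bounded_clinear_op_def is_resolvent_def by auto

theorem lemma2p7:
  fixes J :: "'h::{real_inner,complete_space} \<Rightarrow> 'h"
    and D :: "'h set"
    and A B :: "'h \<Rightarrow> 'h"
  assumes "complex_structure J"
    and "self_adjoint J D A"
    and "self_adjoint J UNIV B"
    and "bounded_clinear_op J B"
    and "\<forall>x. 0 \<le> Re (cinner J (B x) x)"
    and "\<exists>x. B x \<noteq> 0"
  shows "countable {s::real. \<forall>t::real. complex_of_real s \<notin> op_spectrum J D (\<lambda>x. A x + t *\<^sub>R B x)}"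
proof -
  \<comment> \<open>Only real parts of inner products and real spectral parameters enter the argument.\<close>
  define S where "S = {s::real. \<forall>t::real. complex_of_real s \<notin> op_spectrum J D (\<lambda>x. A x + t *\<^sub>R B x)}"
  have "pos_op B"
    using assms(3-5) self_adjoint_imp_symmetric_on[OF assms(3)]
    by (simp add: pos_op_def bounded_clinear_op_def cinner_def)
  have A_lin: "real_linear_on D A"
    using assms(2) by (intro clinear_on_imp_real_linear_on[of J]) (simp add: self_adjoint_def)
  have A_sym: "symmetric_on D A" using assms(2) by (rule self_adjoint_imp_symmetric_on)
  obtain x0 where "B x0 \<noteq> 0" using assms(6) by blast
  have pencil: "\<exists>Q. is_resolvent D (\<lambda>x. A x + t *\<^sub>R B x) s Q" if "s \<in> S" for s t
    using that unfolding S_def by (intro resolvent_if_not_in_op_spectrum[of _ J]) simp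
  have "\<exists>R. is_resolvent D A s R \<and> inner (R (B x0)) (B x0) = 0" if "s \<in> S" for s
  proof -
    have "\<exists>R. is_resolvent D A s R" using pencil[OF that, of 0] by simp
    then obtain R where R: "is_resolvent D A s R" ..
    with resolvent_form_vanishes_on_range[OF \<open>pos_op B\<close> A_sym R pencil[OF that]] show ?thesis
      by blast
  qed
  then have "countable S"
    by (rule countable_if_resolvent_forms_vanish[OF A_lin A_sym \<open>B x0 \<noteq> 0\<close>])
  then show ?thesis by (simp only: S_def)
qed

end
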